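(* Consider a random quantum circuit on $N$ sites of local dimension $q$ consisting of independent gates, each a Haar-random unitary on its support. Fix an order $t$. Let $\Psi$ be the moment operator corresponding to the last gate and $\Phi'$ that of the rest of the circuit, so that $\Phi=\Psi\circ\Phi'$ is the moment operator of the full circuit. Let $s$ be the largest singular value of $\Phi-\Phi_H$, let $\epsilon_A=\|\Phi-\Phi_H\|_\diamond$, and let $\epsilon_M$ be the smallest number such that $\epsilon_M\Phi_H\pm(\Phi-\Phi_H)$ are both completely positive; define $s',\epsilon_A',\epsilon_M'$ analogously with $\Phi'$ in place of $\Phi$. Then $$s\le s',\qquad \epsilon_A\le\epsilon_A',\qquad \epsilon_M\le\epsilon_M'.$$
   Context: For a probability distribution $\nu$ on unitaries on $\mathcal{H}=(\mathbb{C}^q)^{\otimes N}$, its order-$t$ moment operator is the channel $X\mapsto\mathbb{E}_{U\sim\nu}\left[U^{\otimes t}X(U^\dagger)^{\otimes t}\right]$ on operators on $\mathcal{H}^{\otimes t}$. A gate Haar-random on a subset $S$ of sites means $V\otimes I$ with $V$ Haar-distributed on the unitary group of the sites in $S$. $\Phi_H$ denotes the moment operator of the Haar measure on the full unitary group of $\mathcal{H}$. $\|\cdot\|_\diamond$ is the diamond norm; singular values are those of the superoperator viewed as a linear map on the Hilbert–Schmidt space. *)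

theory Defs
  imports "HOL-Analysis.Analysis" "HOL-Probability.Probability"
begin

definition adj :: "complex^'i^'j \<Rightarrow> complex^'j^'i" where
  "adj A = (\<chi> i j. cnj (A $ j $ i))"

definition unitary :: "complex^'i::finite^'i \<Rightarrow> bool" where
  "unitary U \<longleftrightarrow> adj U ** U = mat 1 \<and> U ** adj U = mat 1"

definition unitary_group :: "(complex^'i^'i) set" where
  "unitary_group = {U. unitary U}"

definition mtrace :: "complex^'i^'i \<Rightarrow> complex" where
  "mtrace A = (\<Sum>i\<in>UNIV. A $ i $ i)"

definition psd :: "complex^'i^'i \<Rightarrow> bool" where
  "psd A \<longleftrightarrow> (\<forall>v :: complex^'i.
      Im (\<Sum>i\<in>UNIV. \<Sum>j\<in>UNIV. cnj (v $ i) * A $ i $ j * v $ j) = 0 \<and>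
      Re (\<Sum>i\<in>UNIV. \<Sum>j\<in>UNIV. cnj (v $ i) * A $ i $ j * v $ j) \<ge> 0)"

definition trace_norm :: "complex^'i^'i \<Rightarrow> real" where
  "trace_norm X = Sup {cmod (mtrace (W ** X)) | W. unitary W}"

text \<open>Sites: finite type 'n (N = CARD('n)); local levels: finite type 'q (q = CARD('q)).
  Computational basis of H = (C^q)^{\<otimes>N}: configurations 'n \<Rightarrow> 'q.
  A gate supported on S is V \<otimes> I, V a unitary on the sites in S.\<close>
definition gate_group :: "'n::finite set \<Rightarrow> (complex^('n \<Rightarrow> 'q::finite)^('n \<Rightarrow> 'q)) set" where
  "gate_group S = {U. unitary U \<and>
     (\<exists>V :: ('n \<Rightarrow> 'q) \<Rightarrow> ('n \<Rightarrow> 'q) \<Rightarrow> complex.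
        \<forall>x y. U $ x $ y =
          (if (\<forall>i. i \<notin> S \<longrightarrow> x i = y i) then V (restrict x S) (restrict y S) else 0))}"

definition haar_on :: "(complex^'i^'i) set \<Rightarrow> (complex^'i^'i) measure \<Rightarrow> bool" where
  "haar_on G \<mu> \<longleftrightarrow> prob_space \<mu> \<and> sets \<mu> = sets borel \<and> emeasure \<mu> G = 1 \<and>
     (\<forall>g\<in>G. distr \<mu> borel (\<lambda>U. g ** U) = \<mu>)"

definition tpow :: "complex^'i::finite^'i \<Rightarrow> complex^('t::finite \<Rightarrow> 'i)^('t \<Rightarrow> 'i)" where
  "tpow U = (\<chi> a b. \<Prod>k\<in>UNIV. U $ a k $ b k)"

text \<open>Order-t moment operator, t = CARD('t).\<close>
definition moment :: "(complex^'i^'i) measure \<Rightarrow>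
    complex^('t::finite \<Rightarrow> 'i::finite)^('t \<Rightarrow> 'i) \<Rightarrow> complex^('t \<Rightarrow> 'i)^('t \<Rightarrow> 'i)" where
  "moment \<nu> X = (\<integral>U. (tpow U ** X ** adj (tpow U)) \<partial>\<nu>)"

text \<open>Moment operator of a circuit of independent gates, listed in the order in which
  they are applied (first gate first): the composition of the gate moment operators.\<close>
fun circuit_moment :: "(complex^'i^'i) measure list \<Rightarrow>
    (complex^('t::finite \<Rightarrow> 'i::finite)^('t \<Rightarrow> 'i) \<Rightarrow> complex^('t \<Rightarrow> 'i)^('t \<Rightarrow> 'i))" where
  "circuit_moment [] = id"
| "circuit_moment (\<nu> # \<nu>s) = circuit_moment \<nu>s \<circ> moment \<nu>"

text \<open>L \<otimes> id on an ancilla of the same dimension as the input space.\<close>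
definition tensor_id :: "(complex^'c^'c \<Rightarrow> complex^'c^'c) \<Rightarrow>
    complex^('c \<times> 'c)^('c \<times> 'c) \<Rightarrow> complex^('c \<times> 'c)^('c \<times> 'c)" where
  "tensor_id L Y = (\<chi> p r. L (\<chi> a b. Y $ (a, snd p) $ (b, snd r)) $ fst p $ fst r)"

definition positive_map :: "(complex^'c^'c \<Rightarrow> complex^'d^'d) \<Rightarrow> bool" where
  "positive_map L \<longleftrightarrow> (\<forall>X. psd X \<longrightarrow> psd (L X))"

definition completely_positive :: "(complex^'c^'c \<Rightarrow> complex^'c^'c) \<Rightarrow> bool" where
  "completely_positive L \<longleftrightarrow> positive_map (tensor_id L)"

definition diamond_norm :: "(complex^'c^'c \<Rightarrow> complex^'c^'c) \<Rightarrow> real" where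
  "diamond_norm L = Sup {trace_norm (tensor_id L Y) | Y. trace_norm Y \<le> 1}"

text \<open>Largest singular value of L as a linear map on the Hilbert--Schmidt space
  (the norm on complex^'c^'c is the Frobenius/Hilbert--Schmidt norm).\<close>
definition largest_singular_value :: "(complex^'c^'c \<Rightarrow> complex^'c^'c) \<Rightarrow> real" where
  "largest_singular_value L = onorm L"

text \<open>Smallest eps with eps*PhiH +- (Phi - PhiH) both completely positive (\<infinity> if none).\<close>
definition eps_M :: "(complex^'c^'c \<Rightarrow> complex^'c^'c) \<Rightarrow> (complex^'c^'c \<Rightarrow> complex^'c^'c) \<Rightarrow> ereal" where
  "eps_M \<Phi> \<Phi>H = Inf (ereal ` {\<epsilon>::real.
      completely_positive (\<lambda>X. \<epsilon> *\<^sub>R \<Phi>H X + (\<Phi> X - \<Phi>H X)) \<and>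
      completely_positive (\<lambda>X. \<epsilon> *\<^sub>R \<Phi>H X - (\<Phi> X - \<Phi>H X))})"

end

theory Submission
  imports Defs
begin

text \<open>Since the gate is
  almost surely unitary and the Haar measure is left invariant, \<Psi> \<circ> \<Phi>H = \<Phi>H, hence
  \<Phi> - \<Phi>H = \<Psi> \<circ> (\<Phi>' - \<Phi>H). Both \<Psi> and \<Psi> \<otimes> id are averages of unitary conjugations,
  so they contract the Hilbert--Schmidt norm and the trace norm and preserve positive
  semidefiniteness. Composing with \<Psi> therefore cannot increase the operator norm or the diamond
  norm, and it preserves complete positivity of \<epsilon> \<Phi>H \<plusminus> (\<Phi>' - \<Phi>H).\<close>

lemma adj_nth [simp]: "adj A $ i $ j = cnj (A $ j $ i)"
  by (simp add: adj_def)

lemma matrix_matrix_mult_nth: "(A ** B) $ i $ j = (\<Sum>k\<in>UNIV. A $ i $ k * B $ k $ j)"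
  by (simp add: matrix_matrix_mult_def)

lemma adj_adj [simp]: "adj (adj A) = A"
  by (simp add: vec_eq_iff)

lemma adj_matrix_mult: "adj (A ** B) = adj B ** adj (A :: complex^'a^'b::finite)"
  by (simp add: vec_eq_iff matrix_matrix_mult_nth mult.commute)

lemma adj_mat_1 [simp]: "adj (mat 1 :: complex^'a::finite^'a) = mat 1"
  by (simp add: vec_eq_iff mat_def)

lemma unitary_adj: "unitary U \<Longrightarrow> unitary (adj U)"
  by (simp add: unitary_def)

lemma unitary_mat_1: "unitary (mat 1)"
  by (simp add: unitary_def)

lemma unitary_matrix_mult:
  assumes "unitary U" "unitary V"
  shows "unitary (U ** V)"
proof -
  have "adj (U ** V) ** (U ** V) = adj V ** (adj U ** U) ** V"
    "(U ** V) ** adj (U ** V) = U ** (V ** adj V) ** adj U"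
    by (simp_all add: adj_matrix_mult matrix_mul_assoc)
  with assms show ?thesis
    by (simp add: unitary_def)
qed

lemma mtrace_matrix_mult_commute: "mtrace (A ** B) = mtrace (B ** (A :: complex^'a::finite^'b::finite))"
  unfolding mtrace_def matrix_matrix_mult_nth
  by (subst sum.swap) (simp add: mult.commute)

lemma linear_matrix_conj: "linear (\<lambda>Z. A ** Z ** adj (A :: complex^'a::finite^'b::finite))"
  by (rule linearI)
    (simp_all add: vec_eq_iff matrix_matrix_mult_nth sum.distrib distrib_left distrib_right
      scaleR_sum_right sum_distrib_right)

lemma continuous_on_matrix_conj: "continuous_on UNIV (\<lambda>A. A ** Z ** adj (A :: complex^'a::finite^'b::finite))"
  unfolding matrix_matrix_mult_def adj_def by (intro continuous_intros)

lemma unitary_row_norm: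
  assumes "unitary W"
  shows "(\<Sum>j\<in>UNIV. (cmod (W $ i $ j))\<^sup>2) = 1"
proof -
  have "(W ** adj W) $ i $ i = 1"
    using assms by (simp add: unitary_def mat_def)
  then have "complex_of_real (\<Sum>j\<in>UNIV. (cmod (W $ i $ j))\<^sup>2) = 1"
    by (simp add: matrix_matrix_mult_nth complex_norm_square del: of_real_power)
  then show ?thesis
    using of_real_eq_1_iff by blast
qed

lemma cmod_unitary_nth_le:
  assumes "unitary W"
  shows "cmod (W $ i $ j) \<le> 1"
proof -
  have "(cmod (W $ i $ j))\<^sup>2 \<le> (\<Sum>j\<in>UNIV. (cmod (W $ i $ j))\<^sup>2)"
    by (rule member_le_sum) auto
  with unitary_row_norm[OF assms] show ?thesis
    by (simp add: power_le_one_iff abs_le_square_iff)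
qed

lemma norm_unitary_conj:
  assumes "unitary A"
  shows "norm (A ** Z ** adj A) = norm (Z :: complex^'a::finite^'a)"
proof -
  have norm_sq: "complex_of_real ((norm Y)\<^sup>2) = mtrace (Y ** adj Y)" for Y :: "complex^'a^'a"
    by (simp add: norm_vec_def L2_set_def sum_nonneg mtrace_def matrix_matrix_mult_nth
        complex_norm_square del: of_real_power)
  have "(A ** Z ** adj A) ** adj (A ** Z ** adj A) = A ** Z ** (adj A ** A) ** adj Z ** adj A"
    by (simp add: adj_matrix_mult matrix_mul_assoc)
  also have "\<dots> = A ** ((Z ** adj Z) ** adj A)"
    using assms by (simp add: unitary_def matrix_mul_assoc)
  finally have "mtrace ((A ** Z ** adj A) ** adj (A ** Z ** adj A)) = mtrace ((Z ** adj Z) ** adj A ** A)"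
    by (simp only: mtrace_matrix_mult_commute[of A])
  also have "\<dots> = mtrace (Z ** adj Z)"
    using assms by (simp add: unitary_def flip: matrix_mul_assoc)
  finally have "complex_of_real ((norm (A ** Z ** adj A))\<^sup>2) = complex_of_real ((norm Z)\<^sup>2)"
    by (simp only: norm_sq)
  then show ?thesis
    by (simp only: of_real_eq_iff power2_eq_iff_nonneg norm_ge_zero)
qed

definition quad_form :: "complex^'a::finite^'a \<Rightarrow> complex^'a \<Rightarrow> complex" where
  "quad_form A v = (\<Sum>i\<in>UNIV. \<Sum>j\<in>UNIV. cnj (v $ i) * A $ i $ j * v $ j)"

lemma psd_iff_quad_form: "psd A \<longleftrightarrow> (\<forall>v. Im (quad_form A v) = 0 \<and> 0 \<le> Re (quad_form A v))"
  by (simp add: psd_def quad_form_def)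

lemma linear_quad_form: "linear (\<lambda>A. quad_form A v)"
  by (rule linearI) (simp_all add: quad_form_def sum.distrib distrib_left distrib_right scaleR_sum_right)

lemma sum_cnj_mult_matrix_vector_mult:
  "(\<Sum>i\<in>UNIV. cnj (u $ i) * (B *v x) $ i) = (\<Sum>i\<in>UNIV. cnj ((adj B *v u) $ i) * x $ i)"
  for B :: "complex^'a::finite^'b::finite"
  unfolding matrix_vector_mult_def
  by (simp add: sum_distrib_left sum_distrib_right mult_ac, subst sum.swap, simp)

lemma quad_form_conj: "quad_form (A ** Z ** adj A) v = quad_form Z (adj A *v v)"
proof -
  have quad_form_mv: "quad_form B w = (\<Sum>i\<in>UNIV. cnj (w $ i) * (B *v w) $ i)" for B w
    by (simp add: quad_form_def matrix_vector_mult_def sum_distrib_left mult.assoc)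
  have "quad_form (A ** Z ** adj A) v = (\<Sum>i\<in>UNIV. cnj (v $ i) * (A *v (Z *v (adj A *v v))) $ i)"
    by (simp add: quad_form_mv matrix_vector_mul_assoc matrix_mul_assoc)
  also have "\<dots> = quad_form Z (adj A *v v)"
    unfolding quad_form_mv by (rule sum_cnj_mult_matrix_vector_mult)
  finally show ?thesis .
qed

lemma psd_conj: "psd Z \<Longrightarrow> psd (A ** Z ** adj A)"
  by (simp add: psd_iff_quad_form quad_form_conj)

section \<open>Trace norm\<close>

lemma cmod_mtrace_unitary_le:
  assumes "unitary W"
  shows "cmod (mtrace (W ** X)) \<le> (\<Sum>i\<in>UNIV. \<Sum>j\<in>UNIV. cmod (X $ i $ j))"
proof -
  have "cmod (mtrace (W ** X)) \<le> (\<Sum>i\<in>UNIV. \<Sum>j\<in>UNIV. cmod (W $ i $ j * X $ j $ i))"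
    unfolding mtrace_def matrix_matrix_mult_nth
    by (rule order_trans[OF norm_sum sum_mono[OF norm_sum]])
  also have "\<dots> \<le> (\<Sum>i\<in>UNIV. \<Sum>j\<in>UNIV. cmod (X $ j $ i))"
    using cmod_unitary_nth_le[OF assms]
    by (intro sum_mono) (simp add: norm_mult mult_left_le_one_le)
  also have "\<dots> = (\<Sum>i\<in>UNIV. \<Sum>j\<in>UNIV. cmod (X $ i $ j))"
    by (rule sum.swap)
  finally show ?thesis .
qed

lemma cmod_mtrace_le_trace_norm: "unitary W \<Longrightarrow> cmod (mtrace (W ** X)) \<le> trace_norm X"
  unfolding trace_norm_def
  by (rule cSup_upper) (auto intro!: bdd_aboveI cmod_mtrace_unitary_le)

lemma trace_norm_nonneg: "0 \<le> trace_norm X"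
  using cmod_mtrace_le_trace_norm[OF unitary_mat_1, of X] norm_ge_zero order_trans by blast

lemma trace_norm_leI:
  assumes "\<And>W. unitary W \<Longrightarrow> cmod (mtrace (W ** X)) \<le> b"
  shows "trace_norm X \<le> b"
  unfolding trace_norm_def using assms unitary_mat_1 by (intro cSup_least) auto

lemma trace_norm_le_sum_cmod: "trace_norm X \<le> (\<Sum>i\<in>UNIV. \<Sum>j\<in>UNIV. cmod (X $ i $ j))"
  by (rule trace_norm_leI[OF cmod_mtrace_unitary_le])

lemma trace_norm_unitary_conj_le:
  assumes "unitary A"
  shows "trace_norm (A ** Z ** adj A) \<le> trace_norm (Z :: complex^'a::finite^'a)"
proof (rule trace_norm_leI)
  fix W :: "complex^'a^'a"
  assume "unitary W"
  then have "unitary (adj A ** W ** A)"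
    using assms by (intro unitary_matrix_mult unitary_adj)
  moreover have "mtrace (W ** (A ** Z ** adj A)) = mtrace ((adj A ** W ** A) ** Z)"
    by (metis matrix_mul_assoc mtrace_matrix_mult_commute)
  ultimately show "cmod (mtrace (W ** (A ** Z ** adj A))) \<le> trace_norm Z"
    by (simp add: cmod_mtrace_le_trace_norm)
qed

text \<open>For s = \<plusminus>1 the two traces against X differ by 2 X_ij, which bounds the entries of X
  by its trace norm.\<close>
definition swap_phase :: "complex \<Rightarrow> 'a \<Rightarrow> 'a \<Rightarrow> complex^'a::finite^'a" where
  "swap_phase s i j = (\<chi> k l. if l = Transposition.transpose i j k then (if k = j then s else 1) else 0)"

lemma unitary_swap_phase:
  assumes "s * cnj s = 1"
  shows "unitary (swap_phase s i j)"
proof -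
  define \<tau> where "\<tau> = Transposition.transpose i j"
  define d where "d k = (if k = j then s else 1)" for k
  have W: "swap_phase s i j $ k $ l = (if l = \<tau> k then d k else 0)" for k l
    by (simp add: swap_phase_def \<tau>_def d_def)
  have d: "d k * cnj (d k) = 1" "cnj (d k) * d k = 1" for k
    using assms by (auto simp: d_def mult.commute)
  have \<tau>: "\<tau> (\<tau> k) = k" "\<tau> k = \<tau> m \<longleftrightarrow> k = m" for k m
    by (auto simp: \<tau>_def transpose_eq_iff)
  have "(\<Sum>l\<in>UNIV. swap_phase s i j $ k $ l * cnj (swap_phase s i j $ m $ l)) = (if k = m then 1 else 0)"
    for k m
  proof -
    have "(\<Sum>l\<in>UNIV. swap_phase s i j $ k $ l * cnj (swap_phase s i j $ m $ l))
        = (\<Sum>l\<in>UNIV. if l = \<tau> k then d k * cnj (swap_phase s i j $ m $ l) else 0)"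
      by (rule sum.cong) (simp_all add: W)
    also have "\<dots> = (if k = m then 1 else 0)"
      by (simp add: W d \<tau>)
    finally show ?thesis .
  qed
  moreover have "(\<Sum>l\<in>UNIV. cnj (swap_phase s i j $ l $ k) * swap_phase s i j $ l $ m) = (if k = m then 1 else 0)"
    for k m
  proof -
    have "(\<Sum>l\<in>UNIV. cnj (swap_phase s i j $ l $ k) * swap_phase s i j $ l $ m)
        = (\<Sum>l\<in>UNIV. if l = \<tau> k then cnj (d l) * swap_phase s i j $ l $ m else 0)"
      by (rule sum.cong) (auto simp: W \<tau>)
    also have "\<dots> = (if k = m then 1 else 0)"
      by (simp add: W d \<tau>)
    finally show ?thesis .
  qed
  ultimately show ?thesis
    by (simp add: unitary_def vec_eq_iff matrix_matrix_mult_nth mat_def)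
qed

lemma mtrace_swap_phase:
  "mtrace (swap_phase s i j ** X) = s * X $ i $ j + (\<Sum>k\<in>UNIV - {j}. X $ Transposition.transpose i j k $ k)"
proof -
  define d where "d k = (if k = j then s else 1)" for k
  have row: "(swap_phase s i j ** X) $ k $ k = d k * X $ Transposition.transpose i j k $ k" for k
  proof -
    have "(swap_phase s i j ** X) $ k $ k
        = (\<Sum>l\<in>UNIV. if l = Transposition.transpose i j k then d k * X $ l $ k else 0)"
      unfolding matrix_matrix_mult_nth by (rule sum.cong) (simp_all add: swap_phase_def d_def)
    then show ?thesis
      by simp
  qed
  have "mtrace (swap_phase s i j ** X)
      = d j * X $ i $ j + (\<Sum>k\<in>UNIV - {j}. d k * X $ Transposition.transpose i j k $ k)"
    unfolding mtrace_def row by (subst sum.remove[of _ j]) auto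
  then show ?thesis
    by (simp add: d_def)
qed

lemma cmod_nth_le_trace_norm: "cmod (X $ i $ j) \<le> trace_norm X"
proof -
  have "2 * X $ i $ j = mtrace (swap_phase 1 i j ** X) - mtrace (swap_phase (-1) i j ** X)"
    by (simp add: mtrace_swap_phase)
  then have "2 * cmod (X $ i $ j)
      \<le> cmod (mtrace (swap_phase 1 i j ** X)) + cmod (mtrace (swap_phase (-1) i j ** X))"
    by (metis norm_mult norm_numeral norm_triangle_ineq4)
  also have "\<dots> \<le> trace_norm X + trace_norm X"
    by (intro add_mono cmod_mtrace_le_trace_norm unitary_swap_phase) auto
  finally show ?thesis by simp
qed

lemma norm_le_trace_norm:
  "norm (X :: complex^'a::finite^'a) \<le> real (CARD('a) * CARD('a)) * trace_norm X"
proof -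
  have norm_le_sum: "norm (x :: 'b::real_normed_vector^'a) \<le> (\<Sum>i\<in>UNIV. norm (x $ i))" for x
    by (simp add: norm_vec_def L2_set_le_sum)
  have "norm X \<le> (\<Sum>i\<in>UNIV. \<Sum>j\<in>UNIV. cmod (X $ i $ j))"
    by (rule order_trans[OF norm_le_sum sum_mono[OF norm_le_sum]])
  also have "\<dots> \<le> (\<Sum>i\<in>(UNIV::'a set). \<Sum>j\<in>(UNIV::'a set). trace_norm X)"
    by (intro sum_mono cmod_nth_le_trace_norm)
  finally show ?thesis by simp
qed

lemma trace_norm_le_norm:
  "trace_norm (X :: complex^'a::finite^'a) \<le> real (CARD('a) * CARD('a)) * norm X"
proof -
  have "trace_norm X \<le> (\<Sum>i\<in>UNIV. \<Sum>j\<in>UNIV. cmod (X $ i $ j))"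
    by (rule trace_norm_le_sum_cmod)
  also have "\<dots> \<le> (\<Sum>i\<in>(UNIV::'a set). \<Sum>j\<in>(UNIV::'a set). norm X)"
    by (intro sum_mono order_trans[OF Finite_Cartesian_Product.norm_nth_le Finite_Cartesian_Product.norm_nth_le])
  finally show ?thesis by simp
qed

lemma linear_trace_norm_bounded:
  fixes T :: "complex^'a::finite^'a \<Rightarrow> complex^'b::finite^'b"
  assumes "linear T"
  obtains K where "\<And>X. trace_norm (T X) \<le> K * trace_norm X"
proof -
  obtain B where B: "\<And>X. norm (T X) \<le> norm X * B" "B > 0"
    using assms linear_conv_bounded_linear bounded_linear.pos_bounded by blast
  define ca where "ca = real (CARD('a) * CARD('a))"
  define cb where "cb = real (CARD('b) * CARD('b))"
  have "trace_norm (T X) \<le> cb * ca * B * trace_norm X" for X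
  proof -
    have "trace_norm (T X) \<le> cb * norm (T X)"
      unfolding cb_def by (rule trace_norm_le_norm)
    also have "\<dots> \<le> cb * (ca * trace_norm X * B)"
      using B norm_le_trace_norm[of X]
      by (intro mult_left_mono order_trans[OF B(1)] mult_right_mono) (auto simp: ca_def cb_def)
    finally show ?thesis
      by (simp add: mult_ac)
  qed
  then show ?thesis
    by (rule that)
qed

section \<open>Tensor powers and ancillas\<close>

lemma tpow_nth: "tpow U $ a $ b = (\<Prod>k\<in>UNIV. U $ a k $ b k)"
  by (simp add: tpow_def)

lemma tpow_matrix_mult:
  "(tpow (A ** B) :: complex^('t::finite \<Rightarrow> 'i::finite)^('t \<Rightarrow> 'i)) = tpow A ** tpow B"
proof -
  have "tpow (A ** B) $ a $ c = (tpow A ** tpow B :: complex^('t \<Rightarrow> 'i)^('t \<Rightarrow> 'i)) $ a $ c" for a c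
  proof -
    have "tpow (A ** B) $ a $ c = (\<Prod>k\<in>UNIV. \<Sum>j\<in>UNIV. A $ a k $ j * B $ j $ c k)"
      by (simp add: tpow_nth matrix_matrix_mult_nth)
    also have "\<dots> = (\<Sum>g\<in>PiE UNIV (\<lambda>_. UNIV). \<Prod>k\<in>UNIV. A $ a k $ g k * B $ g k $ c k)"
      by (rule prod_sum_PiE) auto
    also have "\<dots> = (\<Sum>g\<in>UNIV. (\<Prod>k\<in>UNIV. A $ a k $ g k) * (\<Prod>k\<in>UNIV. B $ g k $ c k))"
      by (simp add: prod.distrib)
    also have "\<dots> = (tpow A ** tpow B) $ a $ c"
      by (simp add: tpow_nth matrix_matrix_mult_nth)
    finally show ?thesis .
  qed
  then show ?thesis
    by (simp add: vec_eq_iff)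
qed

lemma tpow_adj: "(tpow (adj A) :: complex^('t::finite \<Rightarrow> 'i::finite)^('t \<Rightarrow> 'i)) = adj (tpow A)"
  by (simp add: vec_eq_iff tpow_nth)

lemma tpow_mat_1: "(tpow (mat 1 :: complex^'i::finite^'i) :: complex^('t::finite \<Rightarrow> 'i)^('t \<Rightarrow> 'i)) = mat 1"
proof -
  have "(\<Prod>k\<in>UNIV. (mat 1 :: complex^'i^'i) $ a k $ b k) = (if a = b then 1 else 0)"
    for a b :: "'t \<Rightarrow> 'i"
  proof (cases "a = b")
    case False
    then obtain k where "a k \<noteq> b k"
      by auto
    then have "(\<Prod>k\<in>UNIV. (mat 1 :: complex^'i^'i) $ a k $ b k) = 0"
      by (intro prod_zero finite_UNIV bexI[of _ k]) (auto simp: mat_def)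
    with False show ?thesis
      by simp
  qed (simp add: mat_def)
  then show ?thesis
    by (simp add: vec_eq_iff tpow_nth mat_def)
qed

lemma unitary_tpow: "unitary U \<Longrightarrow> unitary (tpow U :: complex^('t::finite \<Rightarrow> 'i::finite)^('t \<Rightarrow> 'i))"
  unfolding unitary_def by (metis tpow_adj tpow_matrix_mult tpow_mat_1)

lemma continuous_on_tpow:
  "continuous_on UNIV (tpow :: complex^'i::finite^'i \<Rightarrow> complex^('t::finite \<Rightarrow> 'i)^('t \<Rightarrow> 'i))"
  unfolding tpow_def by (intro continuous_intros)

definition kron_id :: "complex^'c::finite^'c \<Rightarrow> complex^('c \<times> 'd::finite)^('c \<times> 'd)" where
  "kron_id A = (\<chi> p r. A $ fst p $ fst r * of_bool (snd p = snd r))"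

lemma sum_UNIV_prod: "(\<Sum>p\<in>UNIV. f p) = (\<Sum>c\<in>UNIV. \<Sum>d\<in>UNIV. f (c, d))"
  by (simp add: sum.cartesian_product)

lemma kron_id_mult_nth: "(kron_id A ** Z) $ p $ r = (\<Sum>c\<in>UNIV. A $ fst p $ c * Z $ (c, snd p) $ r)"
proof -
  have "(kron_id A ** Z) $ p $ r
      = (\<Sum>c\<in>UNIV. \<Sum>d\<in>UNIV. if d = snd p then A $ fst p $ c * Z $ (c, d) $ r else 0)"
    unfolding matrix_matrix_mult_nth by (subst sum_UNIV_prod) (intro sum.cong refl, auto simp: kron_id_def)
  then show ?thesis
    by simp
qed

lemma mult_adj_kron_id_nth:
  "(M ** adj (kron_id A)) $ p $ r = (\<Sum>c\<in>UNIV. M $ p $ (c, snd r) * cnj (A $ fst r $ c))"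
proof -
  have "(M ** adj (kron_id A)) $ p $ r
      = (\<Sum>c\<in>UNIV. \<Sum>d\<in>UNIV. if d = snd r then M $ p $ (c, d) * cnj (A $ fst r $ c) else 0)"
    unfolding matrix_matrix_mult_nth by (subst sum_UNIV_prod) (intro sum.cong refl, auto simp: kron_id_def)
  then show ?thesis
    by simp
qed

lemma kron_id_conj_nth:
  "(kron_id A ** Y ** adj (kron_id A)) $ p $ r
     = (A ** (\<chi> a b. Y $ (a, snd p) $ (b, snd r)) ** adj A) $ fst p $ fst r"
  unfolding mult_adj_kron_id_nth kron_id_mult_nth by (simp add: matrix_matrix_mult_nth)

lemma kron_id_matrix_mult: "(kron_id (A ** B) :: complex^('c::finite \<times> 'd::finite)^('c \<times> 'd)) = kron_id A ** kron_id B"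
  by (simp add: vec_eq_iff kron_id_mult_nth) (simp add: kron_id_def matrix_matrix_mult_nth)

lemma kron_id_adj: "(kron_id (adj A) :: complex^('c::finite \<times> 'd::finite)^('c \<times> 'd)) = adj (kron_id A)"
  by (simp add: vec_eq_iff kron_id_def)

lemma kron_id_mat_1: "(kron_id (mat 1) :: complex^('c::finite \<times> 'd::finite)^('c \<times> 'd)) = mat 1"
  by (simp add: vec_eq_iff kron_id_def mat_def prod_eq_iff)

lemma unitary_kron_id: "unitary U \<Longrightarrow> unitary (kron_id U :: complex^('c::finite \<times> 'd::finite)^('c \<times> 'd))"
  unfolding unitary_def by (metis kron_id_adj kron_id_matrix_mult kron_id_mat_1)

lemma continuous_on_kron_id:
  "continuous_on UNIV (kron_id :: complex^'c::finite^'c \<Rightarrow> complex^('c \<times> 'd::finite)^('c \<times> 'd))"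
  unfolding kron_id_def by (intro continuous_intros)

lemma tensor_id_comp: "tensor_id (F \<circ> G) Y = tensor_id F (tensor_id G Y)"
proof -
  have "(\<chi> a b. tensor_id G Y $ (a, c) $ (b, d)) = G (\<chi> a b. Y $ (a, c) $ (b, d))" for c d
    by (simp add: tensor_id_def vec_eq_iff)
  then show ?thesis
    by (simp add: tensor_id_def)
qed

lemma linear_tensor_id:
  assumes "linear L"
  shows "linear (tensor_id L)"
proof (rule linearI)
  fix X Y :: "complex^('a::finite \<times> 'a)^('a \<times> 'a)" and r :: real
  have blockwise:
    "(\<chi> a b. X $ (a, c) $ (b, d) + Y $ (a, c) $ (b, d))
       = (\<chi> a b. X $ (a, c) $ (b, d)) + (\<chi> a b. Y $ (a, c) $ (b, d))"
    "(\<chi> a b. r *\<^sub>R (X $ (a, c) $ (b, d))) = r *\<^sub>R (\<chi> a b. X $ (a, c) $ (b, d))" for c d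
    by (simp_all add: vec_eq_iff)
  show "tensor_id L (X + Y) = tensor_id L X + tensor_id L Y"
    "tensor_id L (r *\<^sub>R X) = r *\<^sub>R tensor_id L X"
    by (simp_all add: tensor_id_def vec_eq_iff blockwise linear_add[OF assms] linear_scale[OF assms])
qed

lemma completely_positive_comp:
  "completely_positive F \<Longrightarrow> completely_positive G \<Longrightarrow> completely_positive (F \<circ> G)"
  by (simp add: completely_positive_def positive_map_def tensor_id_comp)

section \<open>Post-composition with a channel\<close>

lemma largest_singular_value_comp_le:
  fixes \<Psi> L :: "complex^'c::finite^'c \<Rightarrow> complex^'c^'c"
  assumes "linear \<Psi>" "linear L" and contraction: "\<And>Z. norm (\<Psi> Z) \<le> norm Z"
  shows "largest_singular_value (\<Psi> \<circ> L) \<le> largest_singular_value L"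
proof -
  have bounded: "bounded_linear \<Psi>" "bounded_linear L"
    using assms(1,2) by (simp_all add: linear_conv_bounded_linear)
  have "onorm \<Psi> \<le> 1"
    by (rule onorm_bound) (simp_all add: contraction)
  then have "onorm \<Psi> * onorm L \<le> onorm L"
    by (simp add: mult_left_le_one_le onorm_pos_le bounded)
  then show ?thesis
    unfolding largest_singular_value_def using onorm_compose[OF bounded] by linarith
qed

lemma diamond_norm_comp_le:
  fixes \<Psi> L :: "complex^'c::finite^'c \<Rightarrow> complex^'c^'c"
  assumes "linear L" and contraction: "\<And>Y. trace_norm (tensor_id \<Psi> Y) \<le> trace_norm Y"
  shows "diamond_norm (\<Psi> \<circ> L) \<le> diamond_norm L"
  unfolding diamond_norm_def
proof (rule cSup_mono)
  obtain K where K: "\<And>Y. trace_norm (tensor_id L Y) \<le> K * trace_norm Y"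
    using linear_trace_norm_bounded[OF linear_tensor_id[OF assms(1)]] by blast
  show "bdd_above {trace_norm (tensor_id L Y) | Y. trace_norm Y \<le> 1}"
  proof (rule bdd_aboveI)
    fix x
    assume "x \<in> {trace_norm (tensor_id L Y) | Y. trace_norm Y \<le> 1}"
    then obtain Y where x: "x = trace_norm (tensor_id L Y)" and Y: "trace_norm Y \<le> 1"
      by blast
    have "x \<le> \<bar>K\<bar> * trace_norm Y"
      using K[of Y] mult_right_mono[OF abs_ge_self trace_norm_nonneg] unfolding x by (rule order_trans)
    also have "\<dots> \<le> \<bar>K\<bar>"
      using Y by (simp add: mult_left_le)
    finally show "x \<le> \<bar>K\<bar>" .
  qed
  have "trace_norm (0 :: complex^('c \<times> 'c)^('c \<times> 'c)) \<le> 1"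
    using trace_norm_le_sum_cmod[of "0 :: complex^('c \<times> 'c)^('c \<times> 'c)"] by simp
  then show "{trace_norm (tensor_id (\<Psi> \<circ> L) Y) | Y. trace_norm Y \<le> 1} \<noteq> {}"
    by blast
next
  fix b
  assume "b \<in> {trace_norm (tensor_id (\<Psi> \<circ> L) Y) | Y. trace_norm Y \<le> 1}"
  then obtain Y where "b = trace_norm (tensor_id \<Psi> (tensor_id L Y))" "trace_norm Y \<le> 1"
    by (auto simp: tensor_id_comp)
  with contraction show "\<exists>a\<in>{trace_norm (tensor_id L Y) | Y. trace_norm Y \<le> 1}. b \<le> a"
    by blast
qed

lemma eps_M_comp_le:
  assumes "linear \<Psi>" "completely_positive \<Psi>" and fixes_\<Phi>H: "\<And>X. \<Psi> (\<Phi>H X) = \<Phi>H X"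
  shows "eps_M (\<Psi> \<circ> \<Phi>) \<Phi>H \<le> eps_M \<Phi> \<Phi>H"
proof -
  have "(\<lambda>X. \<epsilon> *\<^sub>R \<Phi>H X + (\<Psi> (\<Phi> X) - \<Phi>H X))
      = \<Psi> \<circ> (\<lambda>X. \<epsilon> *\<^sub>R \<Phi>H X + (\<Phi> X - \<Phi>H X))"
    "(\<lambda>X. \<epsilon> *\<^sub>R \<Phi>H X - (\<Psi> (\<Phi> X) - \<Phi>H X))
      = \<Psi> \<circ> (\<lambda>X. \<epsilon> *\<^sub>R \<Phi>H X - (\<Phi> X - \<Phi>H X))"
    for \<epsilon>
    using assms(1) by (simp_all add: fun_eq_iff linear_add linear_diff linear_scale fixes_\<Phi>H)
  then show ?thesis
    unfolding eps_M_def
    by (intro Inf_superset_mono image_mono) (auto intro: completely_positive_comp[OF assms(2)])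
qed

section \<open>Random unitary channels\<close>

locale random_unitary = prob_space M for M :: "'x measure" +
  fixes f :: "'x \<Rightarrow> complex^'a::finite^'a"
  assumes measurable_f: "f \<in> borel_measurable M"
    and AE_unitary: "AE x in M. unitary (f x)"
begin

definition twirl :: "complex^'a^'a \<Rightarrow> complex^'a^'a" where
  "twirl Z = (\<integral>x. f x ** Z ** adj (f x) \<partial>M)"

lemma integrable_conj: "integrable M (\<lambda>x. f x ** Z ** adj (f x))"
proof (rule integrable_const_bound[where B = "norm Z"])
  show "AE x in M. norm (f x ** Z ** adj (f x)) \<le> norm Z"
    using AE_unitary by eventually_elim (simp add: norm_unitary_conj)
  show "(\<lambda>x. f x ** Z ** adj (f x)) \<in> borel_measurable M"
    using continuous_on_matrix_conj measurable_f by (rule borel_measurable_continuous_on)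
qed

lemma bounded_linear_twirl_commute:
  assumes "bounded_linear T"
  shows "T (twirl Z) = (\<integral>x. T (f x ** Z ** adj (f x)) \<partial>M)"
  unfolding twirl_def using assms integrable_conj by (rule integral_bounded_linear[symmetric])

lemma linear_twirl: "linear twirl"
  by (rule linearI) (simp_all add: twirl_def linear_add[OF linear_matrix_conj]
      linear_scale[OF linear_matrix_conj] integrable_conj)

lemma norm_twirl_le: "norm (twirl Z) \<le> norm Z"
proof -
  have "norm (twirl Z) \<le> (\<integral>x. norm (f x ** Z ** adj (f x)) \<partial>M)"
    unfolding twirl_def by (rule integral_norm_bound)
  also have "\<dots> = (\<integral>x. norm Z \<partial>M)"
    using AE_unitary integrable_conj
    by (intro integral_cong_AE) (auto simp: norm_unitary_conj elim: AE_mp)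
  finally show ?thesis
    by (simp add: prob_space)
qed

lemma trace_norm_twirl_le: "trace_norm (twirl Z) \<le> trace_norm Z"
proof (rule trace_norm_leI)
  fix W :: "complex^'a^'a"
  assume W: "unitary W"
  have bl: "bounded_linear (\<lambda>Y. mtrace (W ** Y))"
    unfolding linear_conv_bounded_linear[symmetric]
    by (rule linearI) (simp_all add: mtrace_def matrix_matrix_mult_nth sum.distrib distrib_left
        scaleR_sum_right)
  have "cmod (mtrace (W ** twirl Z)) \<le> (\<integral>x. cmod (mtrace (W ** (f x ** Z ** adj (f x)))) \<partial>M)"
    unfolding bounded_linear_twirl_commute[OF bl] by (rule integral_norm_bound)
  also have "\<dots> \<le> (\<integral>x. trace_norm Z \<partial>M)"
  proof (rule integral_mono_AE)
    show "integrable M (\<lambda>x. cmod (mtrace (W ** (f x ** Z ** adj (f x)))))"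
      by (intro integrable_norm integrable_bounded_linear[OF bl integrable_conj])
    show "AE x in M. cmod (mtrace (W ** (f x ** Z ** adj (f x)))) \<le> trace_norm Z"
      using AE_unitary
      by eventually_elim (metis W cmod_mtrace_le_trace_norm order_trans trace_norm_unitary_conj_le)
  qed simp
  finally show "cmod (mtrace (W ** twirl Z)) \<le> trace_norm Z"
    by (simp add: prob_space)
qed

lemma psd_twirl:
  assumes "psd Z"
  shows "psd (twirl Z)"
  unfolding psd_iff_quad_form
proof
  fix v :: "complex^'a"
  have bl: "bounded_linear (\<lambda>Y. quad_form Y v)"
    using linear_quad_form linear_conv_bounded_linear by blast
  have integrable: "integrable M (\<lambda>x. quad_form (f x ** Z ** adj (f x)) v)"
    by (rule integrable_bounded_linear[OF bl integrable_conj])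
  have pointwise:
    "Im (quad_form (f x ** Z ** adj (f x)) v) = 0 \<and> 0 \<le> Re (quad_form (f x ** Z ** adj (f x)) v)" for x
    using psd_conj[OF assms, of "f x"] unfolding psd_iff_quad_form by blast
  have "Im (quad_form (twirl Z) v) = (\<integral>x. Im (quad_form (f x ** Z ** adj (f x)) v) \<partial>M)"
    "Re (quad_form (twirl Z) v) = (\<integral>x. Re (quad_form (f x ** Z ** adj (f x)) v) \<partial>M)"
    unfolding bounded_linear_twirl_commute[OF bl]
    by (simp_all add: integral_Im integral_Re integrable)
  with pointwise show "Im (quad_form (twirl Z) v) = 0 \<and> 0 \<le> Re (quad_form (twirl Z) v)"
    by simp
qed

end

section \<open>Haar-random gates\<close>

lemma haar_on_prob_space: "haar_on G \<rho> \<Longrightarrow> prob_space \<rho>"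
  by (simp add: haar_on_def)

lemma haar_on_AE_mem:
  assumes "haar_on G \<rho>"
  shows "AE U in \<rho>. U \<in> G"
proof -
  interpret prob_space \<rho>
    using assms by (rule haar_on_prob_space)
  have "emeasure \<rho> G = 1"
    using assms by (simp add: haar_on_def)
  moreover from this have "G \<in> sets \<rho>"
    using emeasure_notin_sets by fastforce
  ultimately show ?thesis
    by (simp add: AE_in_set_eq_1 emeasure_eq_measure)
qed

lemma haar_on_random_unitary:
  assumes "haar_on G \<rho>" "G \<subseteq> unitary_group"
    and "continuous_on UNIV g" "\<And>U. unitary U \<Longrightarrow> unitary (g U)"
  shows "random_unitary \<rho> g"
proof -
  interpret prob_space \<rho>
    using assms(1) by (rule haar_on_prob_space)
  have "sets \<rho> = sets borel"
    using assms(1) by (simp add: haar_on_def)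
  then have "g \<in> borel_measurable \<rho>"
    using borel_measurable_continuous_onI[OF assms(3)] by (simp add: measurable_def)
  moreover have "AE U in \<rho>. unitary (g U)"
    using haar_on_AE_mem[OF assms(1)] by eventually_elim (use assms(2,4) in \<open>auto simp: unitary_group_def\<close>)
  ultimately show ?thesis
    by unfold_locales
qed

lemma random_unitary_tpow:
  "haar_on G \<rho> \<Longrightarrow> G \<subseteq> unitary_group \<Longrightarrow>
    random_unitary \<rho> (tpow :: complex^'i::finite^'i \<Rightarrow> complex^('t::finite \<Rightarrow> 'i)^('t \<Rightarrow> 'i))"
  by (rule haar_on_random_unitary) (simp_all add: continuous_on_tpow unitary_tpow)

lemma random_unitary_kron_id_tpow:
  "haar_on G \<rho> \<Longrightarrow> G \<subseteq> unitary_group \<Longrightarrow>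
    random_unitary \<rho> (\<lambda>U. kron_id (tpow U :: complex^('t::finite \<Rightarrow> 'i::finite)^('t \<Rightarrow> 'i)) ::
      complex^(('t \<Rightarrow> 'i) \<times> ('t \<Rightarrow> 'i))^(('t \<Rightarrow> 'i) \<times> ('t \<Rightarrow> 'i)))"
  by (rule haar_on_random_unitary)
    (auto intro: continuous_on_compose2[OF continuous_on_kron_id continuous_on_tpow] unitary_kron_id unitary_tpow)

lemma moment_eq_twirl:
  assumes "random_unitary \<rho> (tpow :: complex^'i::finite^'i \<Rightarrow> complex^('t::finite \<Rightarrow> 'i)^('t \<Rightarrow> 'i))"
  shows "moment \<rho> = random_unitary.twirl \<rho> (tpow :: complex^'i^'i \<Rightarrow> complex^('t \<Rightarrow> 'i)^('t \<Rightarrow> 'i))"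
  by (simp add: fun_eq_iff moment_def random_unitary.twirl_def[OF assms])

lemma bounded_linear_matrix_nth: "bounded_linear (\<lambda>M :: 'a::real_normed_vector^'n::finite^'m::finite. M $ i $ j)"
  by (simp add: bounded_linear_vec_nth bounded_linear_compose[OF bounded_linear_vec_nth])

lemma tensor_id_moment:
  assumes "haar_on G \<rho>" "G \<subseteq> unitary_group"
  shows "tensor_id (moment \<rho> :: complex^('t::finite \<Rightarrow> 'i::finite)^('t \<Rightarrow> 'i) \<Rightarrow> _)
    = random_unitary.twirl \<rho> (\<lambda>U. kron_id (tpow U :: complex^('t \<Rightarrow> 'i)^('t \<Rightarrow> 'i)))"
proof -
  interpret P: random_unitary \<rho> "tpow :: complex^'i^'i \<Rightarrow> complex^('t \<Rightarrow> 'i)^('t \<Rightarrow> 'i)"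
    using assms by (rule random_unitary_tpow)
  interpret K: random_unitary \<rho> "\<lambda>U. kron_id (tpow U :: complex^('t \<Rightarrow> 'i)^('t \<Rightarrow> 'i)) ::
      complex^(('t \<Rightarrow> 'i) \<times> ('t \<Rightarrow> 'i))^(('t \<Rightarrow> 'i) \<times> ('t \<Rightarrow> 'i))"
    using assms by (rule random_unitary_kron_id_tpow)
  have "tensor_id (moment \<rho>) Y $ p $ r = K.twirl Y $ p $ r" for Y p r
    unfolding tensor_id_def moment_eq_twirl[OF P.random_unitary_axioms] vec_lambda_beta
      P.bounded_linear_twirl_commute[OF bounded_linear_matrix_nth]
      K.bounded_linear_twirl_commute[OF bounded_linear_matrix_nth]
    by (simp add: kron_id_conj_nth)
  then show ?thesis
    by (simp add: fun_eq_iff vec_eq_iff)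
qed

lemma
  assumes "haar_on G \<rho>" "G \<subseteq> unitary_group"
  shows linear_moment: "linear (moment \<rho> :: complex^('t::finite \<Rightarrow> 'i::finite)^('t \<Rightarrow> 'i) \<Rightarrow> _)"
    and norm_moment_le: "norm (moment \<rho> X) \<le> norm (X :: complex^('t \<Rightarrow> 'i)^('t \<Rightarrow> 'i))"
    and trace_norm_tensor_id_moment_le:
      "trace_norm (tensor_id (moment \<rho> :: complex^('t \<Rightarrow> 'i)^('t \<Rightarrow> 'i) \<Rightarrow> _) Y) \<le> trace_norm Y"
    and completely_positive_moment:
      "completely_positive (moment \<rho> :: complex^('t \<Rightarrow> 'i)^('t \<Rightarrow> 'i) \<Rightarrow> _)"
proof -
  interpret P: random_unitary \<rho> "tpow :: complex^'i^'i \<Rightarrow> complex^('t \<Rightarrow> 'i)^('t \<Rightarrow> 'i)"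
    using assms by (rule random_unitary_tpow)
  interpret K: random_unitary \<rho> "\<lambda>U. kron_id (tpow U :: complex^('t \<Rightarrow> 'i)^('t \<Rightarrow> 'i)) ::
      complex^(('t \<Rightarrow> 'i) \<times> ('t \<Rightarrow> 'i))^(('t \<Rightarrow> 'i) \<times> ('t \<Rightarrow> 'i))"
    using assms by (rule random_unitary_kron_id_tpow)
  show "linear (moment \<rho> :: complex^('t \<Rightarrow> 'i)^('t \<Rightarrow> 'i) \<Rightarrow> _)"
    unfolding moment_eq_twirl[OF P.random_unitary_axioms] by (rule P.linear_twirl)
  show "norm (moment \<rho> X) \<le> norm X"
    unfolding moment_eq_twirl[OF P.random_unitary_axioms] by (rule P.norm_twirl_le)
  show "trace_norm (tensor_id (moment \<rho>) Y) \<le> trace_norm Y"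
    unfolding tensor_id_moment[OF assms] by (rule K.trace_norm_twirl_le)
  show "completely_positive (moment \<rho> :: complex^('t \<Rightarrow> 'i)^('t \<Rightarrow> 'i) \<Rightarrow> _)"
    unfolding completely_positive_def positive_map_def tensor_id_moment[OF assms]
    by (blast intro: K.psd_twirl)
qed

lemma moment_haar_conj:
  assumes haar: "haar_on unitary_group \<mu>" and "unitary V"
  shows "tpow V ** moment \<mu> X ** adj (tpow V) = moment \<mu> (X :: complex^('t::finite \<Rightarrow> 'i::finite)^('t \<Rightarrow> 'i))"
proof -
  interpret H: random_unitary \<mu> "tpow :: complex^'i^'i \<Rightarrow> complex^('t \<Rightarrow> 'i)^('t \<Rightarrow> 'i)"
    using haar subset_refl by (rule random_unitary_tpow)
  define h where "h U = (tpow U :: complex^('t \<Rightarrow> 'i)^('t \<Rightarrow> 'i)) ** X ** adj (tpow U)" for U :: "complex^'i^'i"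
  have sets: "sets \<mu> = sets borel"
    using haar by (simp add: haar_on_def)
  have h_measurable: "h \<in> borel_measurable borel"
    unfolding h_def
    by (intro borel_measurable_continuous_onI
        continuous_on_compose2[OF continuous_on_matrix_conj continuous_on_tpow]) auto
  have left_mult_measurable: "(\<lambda>U. V ** U) \<in> measurable \<mu> borel"
    unfolding measurable_cong_sets[OF sets refl] matrix_matrix_mult_def
    by (intro borel_measurable_continuous_onI continuous_intros)
  have "tpow V ** moment \<mu> X ** adj (tpow V) = (\<integral>U. tpow V ** h U ** adj (tpow V) \<partial>\<mu>)"
    unfolding moment_eq_twirl[OF H.random_unitary_axioms] h_def
    by (rule H.bounded_linear_twirl_commute[OF linear_matrix_conj[THEN linear_conv_bounded_linear[THEN iffD1]]])
  also have "\<dots> = (\<integral>U. h (V ** U) \<partial>\<mu>)"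
    by (simp add: h_def tpow_matrix_mult adj_matrix_mult matrix_mul_assoc)
  also have "\<dots> = integral\<^sup>L (distr \<mu> borel (\<lambda>U. V ** U)) h"
    by (rule integral_distr[symmetric, OF left_mult_measurable h_measurable])
  also have "\<dots> = (\<integral>U. h U \<partial>\<mu>)"
    using haar \<open>unitary V\<close> by (simp add: haar_on_def unitary_group_def)
  also have "\<dots> = moment \<mu> X"
    by (simp add: moment_def h_def)
  finally show ?thesis .
qed

lemma moment_absorbs_haar_moment:
  assumes "haar_on unitary_group \<mu>" "haar_on G \<nu>" "G \<subseteq> unitary_group"
  shows "moment \<nu> (moment \<mu> X) = moment \<mu> (X :: complex^('t::finite \<Rightarrow> 'i::finite)^('t \<Rightarrow> 'i))"
proof -
  interpret N: random_unitary \<nu> "tpow :: complex^'i^'i \<Rightarrow> complex^('t \<Rightarrow> 'i)^('t \<Rightarrow> 'i)"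
    using assms(2,3) by (rule random_unitary_tpow)
  have "AE V in \<nu>. tpow V ** moment \<mu> X ** adj (tpow V) = moment \<mu> X"
    using haar_on_AE_mem[OF assms(2)]
    by eventually_elim (use assms(1,3) moment_haar_conj in \<open>auto simp: unitary_group_def\<close>)
  then have "moment \<nu> (moment \<mu> X) = (\<integral>V. moment \<mu> X \<partial>\<nu>)"
    unfolding moment_def[of \<nu>]
    by (intro integral_cong_AE) (simp_all add: borel_measurable_integrable[OF N.integrable_conj])
  then show ?thesis
    by (simp add: N.prob_space)
qed

lemma circuit_moment_append: "circuit_moment (\<nu>s @ [\<nu>]) = moment \<nu> \<circ> circuit_moment \<nu>s"
  by (induction \<nu>s) auto

lemma linear_circuit_moment:
  "(\<And>\<rho>. \<rho> \<in> set \<nu>s \<Longrightarrow>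
      linear (moment \<rho> :: complex^('t::finite \<Rightarrow> 'i::finite)^('t \<Rightarrow> 'i) \<Rightarrow> _))
   \<Longrightarrow> linear (circuit_moment \<nu>s :: complex^('t \<Rightarrow> 'i)^('t \<Rightarrow> 'i) \<Rightarrow> _)"
  by (induction \<nu>s) (auto intro: linear_compose linear_id)

lemma gate_group_subset_unitary_group: "gate_group S \<subseteq> unitary_group"
  by (auto simp: gate_group_def unitary_group_def)

lemma linear_circuit_moment_haar_gates:
  assumes "\<forall>(T, \<rho>) \<in> set gates. haar_on (gate_group T) \<rho>"
  shows "linear (circuit_moment (map snd gates) ::
    complex^('t::finite \<Rightarrow> 'n::finite \<Rightarrow> 'q::finite)^('t \<Rightarrow> 'n \<Rightarrow> 'q) \<Rightarrow> _)"
proof (rule linear_circuit_moment)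
  fix \<rho>
  assume "\<rho> \<in> set (map snd gates)"
  with assms obtain T where "haar_on (gate_group T) \<rho>"
    by auto
  then show "linear (moment \<rho> :: complex^('t \<Rightarrow> 'n \<Rightarrow> 'q)^('t \<Rightarrow> 'n \<Rightarrow> 'q) \<Rightarrow> _)"
    using gate_group_subset_unitary_group by (rule linear_moment)
qed

theorem lemma3:
  fixes gates :: "('n::finite set \<times> (complex^('n \<Rightarrow> 'q::finite)^('n \<Rightarrow> 'q)) measure) list"
    and S :: "'n set"
    and \<nu> \<mu>H :: "(complex^('n \<Rightarrow> 'q)^('n \<Rightarrow> 'q)) measure"
    and \<Phi> \<Phi>' \<Phi>H :: "complex^('t::finite \<Rightarrow> 'n \<Rightarrow> 'q)^('t \<Rightarrow> 'n \<Rightarrow> 'q) \<Rightarrow>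
                      complex^('t \<Rightarrow> 'n \<Rightarrow> 'q)^('t \<Rightarrow> 'n \<Rightarrow> 'q)"
  assumes gates_haar: "\<forall>(T, \<rho>) \<in> set gates. haar_on (gate_group T) \<rho>"
    and last_haar: "haar_on (gate_group S) \<nu>"
    and full_haar: "haar_on unitary_group \<mu>H"
    and \<Phi>H_def: "\<Phi>H = moment \<mu>H"
    and \<Phi>'_def: "\<Phi>' = circuit_moment (map snd gates)"
    and \<Phi>_def: "\<Phi> = circuit_moment (map snd (gates @ [(S, \<nu>)]))"
  shows "largest_singular_value (\<lambda>X. \<Phi> X - \<Phi>H X) \<le> largest_singular_value (\<lambda>X. \<Phi>' X - \<Phi>H X)
       \<and> diamond_norm (\<lambda>X. \<Phi> X - \<Phi>H X) \<le> diamond_norm (\<lambda>X. \<Phi>' X - \<Phi>H X)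
       \<and> eps_M \<Phi> \<Phi>H \<le> eps_M \<Phi>' \<Phi>H"
proof -
  let ?\<Psi> = "moment \<nu> :: complex^('t \<Rightarrow> 'n \<Rightarrow> 'q)^('t \<Rightarrow> 'n \<Rightarrow> 'q) \<Rightarrow> _"
  note \<Psi>_haar = last_haar gate_group_subset_unitary_group
  have \<Phi>_eq: "\<Phi> = ?\<Psi> \<circ> \<Phi>'"
    by (simp add: \<Phi>_def \<Phi>'_def circuit_moment_append)
  have \<Psi>_fixes_\<Phi>H: "?\<Psi> (\<Phi>H X) = \<Phi>H X" for X
    unfolding \<Phi>H_def using full_haar \<Psi>_haar by (rule moment_absorbs_haar_moment)
  have linear_gap': "linear (\<lambda>X. \<Phi>' X - \<Phi>H X)"
    unfolding \<Phi>'_def \<Phi>H_def using linear_circuit_moment_haar_gates[OF gates_haar]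
      linear_moment[OF full_haar subset_refl] by (rule linear_compose_sub)
  have gap_eq: "(\<lambda>X. \<Phi> X - \<Phi>H X) = ?\<Psi> \<circ> (\<lambda>X. \<Phi>' X - \<Phi>H X)"
    by (simp add: fun_eq_iff \<Phi>_eq linear_diff[OF linear_moment[OF \<Psi>_haar]] \<Psi>_fixes_\<Phi>H)
  have "largest_singular_value (\<lambda>X. \<Phi> X - \<Phi>H X) \<le> largest_singular_value (\<lambda>X. \<Phi>' X - \<Phi>H X)"
    unfolding gap_eq using linear_moment[OF \<Psi>_haar] linear_gap' norm_moment_le[OF \<Psi>_haar]
    by (rule largest_singular_value_comp_le)
  moreover have "diamond_norm (\<lambda>X. \<Phi> X - \<Phi>H X) \<le> diamond_norm (\<lambda>X. \<Phi>' X - \<Phi>H X)"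
    unfolding gap_eq using linear_gap' trace_norm_tensor_id_moment_le[OF \<Psi>_haar]
    by (rule diamond_norm_comp_le)
  moreover have "eps_M \<Phi> \<Phi>H \<le> eps_M \<Phi>' \<Phi>H"
    unfolding \<Phi>_eq using linear_moment[OF \<Psi>_haar] completely_positive_moment[OF \<Psi>_haar] \<Psi>_fixes_\<Phi>H
    by (rule eps_M_comp_le)
  ultimately show ?thesis
    by blast
qed

end
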